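(* Let $K$ be a field of characteristic zero. There is no $P\in A$ of the form $P=y^{(m)}-Q_0$ with $m\ge2$ and $Q_0\in A$ not involving the variables $y^{(i)}$ for $i\ge m$ such that $L(P)=\langle p,q,xq,xp-yq,yp\rangle_K$, where $p=\partial/\partial x$, $q=\partial/\partial y$.
   Context: $A=K[[x,y]][y',y'',\dots]$ is the polynomial ring in variables $y^{(1)}=y',y^{(2)}=y'',\dots$ over $K[[x,y]]$ (write $y^{(0)}=y$). The total derivative is the derivation $D_x=\partial/\partial x+\sum_{i\ge0}y^{(i+1)}\partial/\partial y^{(i)}$ of $A$. Every formal vector field $X=f\partial_x+g\partial_y\in\operatorname{Der}K[[x,y]]$ has a unique extension (its prolongation, still denoted $X$) to a $K$-linear derivation of $A$ such that $[X,D_x]=QD_x$ for some $Q\in A$; explicitly $Q=-f_x-f_yy'$ and $X(y^{(k+1)})=D_x(X(y^{(k)}))+Qy^{(k+1)}$. For $P=y^{(m)}-Q_0$ as in the claim, $L(P)$ (the algebra of Lie point symmetries) is the set of $X\in\operatorname{Der}K[[x,y]]$ whose prolongation satisfies that $X(P)$ is divisible by $P$ in $A$. *)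

theory Defs
  imports "HOL-Library.Poly_Mapping"
begin

text \<open>
Uniform representation: a (formal) series in the countably many variables
z_0 = x, z_(k+1) = y^(k) (so z_1 = y, z_2 = y', ...) is its coefficient function
on monomials (finitely supported exponent vectors).  K[[x,y]] is the set of series
only involving z_0, z_1; the ring A = K[[x,y]][y',y'',...] is the set of series in
which only finitely many monomials in the variables y', y'', ... occur.
\<close>

type_synonym 'a ser = "(nat \<Rightarrow>\<^sub>0 nat) \<Rightarrow> 'a"

definition ser_zero :: "'a::field ser" where
  "ser_zero = (\<lambda>_. 0)"

definition ser_const :: "'a::field \<Rightarrow> 'a ser" where
  "ser_const c = (\<lambda>m. if m = 0 then c else 0)"

definition ser_var :: "nat \<Rightarrow> 'a::field ser" where
  "ser_var i = (\<lambda>m. if m = Poly_Mapping.single i 1 then 1 else 0)"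

definition ser_add :: "'a::field ser \<Rightarrow> 'a ser \<Rightarrow> 'a ser" where
  "ser_add f g = (\<lambda>m. f m + g m)"

definition ser_sub :: "'a::field ser \<Rightarrow> 'a ser \<Rightarrow> 'a ser" where
  "ser_sub f g = (\<lambda>m. f m - g m)"

definition ser_neg :: "'a::field ser \<Rightarrow> 'a ser" where
  "ser_neg f = (\<lambda>m. - f m)"

definition ser_smult :: "'a::field \<Rightarrow> 'a ser \<Rightarrow> 'a ser" where
  "ser_smult c f = (\<lambda>m. c * f m)"

text \<open>Cauchy product (each coefficient is a finite sum).\<close>
definition ser_mult :: "'a::field ser \<Rightarrow> 'a ser \<Rightarrow> 'a ser" where
  "ser_mult f g = (\<lambda>m. \<Sum>p\<in>{p. fst p + snd p = m}. f (fst p) * g (snd p))"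

definition ser_pd :: "nat \<Rightarrow> 'a::field ser \<Rightarrow> 'a ser" where
  "ser_pd i f = (\<lambda>m. of_nat (Poly_Mapping.lookup m i + 1) * f (m + Poly_Mapping.single i 1))"

definition in_Kxy :: "'a::field ser \<Rightarrow> bool" where
  "in_Kxy f \<longleftrightarrow> (\<forall>m. f m \<noteq> 0 \<longrightarrow> (\<forall>i\<ge>2. Poly_Mapping.lookup m i = 0))"

definition in_A :: "'a::field ser \<Rightarrow> bool" where
  "in_A f \<longleftrightarrow> finite ((\<lambda>m. (\<lambda>i. if 2 \<le> i then Poly_Mapping.lookup m i else 0)) ` {m. f m \<noteq> 0})"

text \<open>Total derivative D_x = d/dx + sum_k y^(k+1) d/dy^(k); on each coefficient
only finitely many summands can contribute.\<close>
definition Dx :: "'a::field ser \<Rightarrow> 'a ser" where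
  "Dx h = (\<lambda>m. ser_pd 0 h m +
      (\<Sum>k\<in>{k. Poly_Mapping.lookup m (Suc (Suc k)) \<noteq> 0}.
          ser_mult (ser_var (Suc (Suc k))) (ser_pd (Suc k) h) m))"

definition prolQ :: "'a::field ser \<Rightarrow> 'a ser" where
  "prolQ f = ser_sub (ser_neg (ser_pd 0 f)) (ser_mult (ser_pd 1 f) (ser_var 2))"

text \<open>prolPhi f g k = X(y^(k)) for X = f p + g q.\<close>
fun prolPhi :: "'a::field ser \<Rightarrow> 'a ser \<Rightarrow> nat \<Rightarrow> 'a ser" where
  "prolPhi f g 0 = g"
| "prolPhi f g (Suc k) =
     ser_add (Dx (prolPhi f g k)) (ser_mult (prolQ f) (ser_var (Suc (Suc k))))"

text \<open>Prolongation of X = f p + g q acting on h \<in> A: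
X(h) = f dh/dx + sum_k X(y^(k)) dh/dy^(k)  (finite sum for h \<in> A).\<close>
definition prol :: "'a::field ser \<Rightarrow> 'a ser \<Rightarrow> 'a ser \<Rightarrow> 'a ser" where
  "prol f g h = (\<lambda>m. ser_mult f (ser_pd 0 h) m +
      (\<Sum>k\<in>{k. ser_pd (Suc k) h \<noteq> ser_zero}.
          ser_mult (prolPhi f g k) (ser_pd (Suc k) h) m))"

text \<open>L(P): vector fields f p + g q (as pairs (f,g) in K[[x,y]]) whose prolongation
maps P to a multiple of P in A.\<close>
definition Lsym :: "'a::field ser \<Rightarrow> ('a ser \<times> 'a ser) set" where
  "Lsym P = {(f, g). in_Kxy f \<and> in_Kxy g \<and>
      (\<exists>B. in_A B \<and> prol f g P = ser_mult P B)}"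

text \<open>The K-span of p, q, xq, xp - yq, yp, as pairs (f,g) of coefficients of (p,q).\<close>
definition span5 :: "('a::field ser \<times> 'a ser) set" where
  "span5 = {(f, g). \<exists>a b c d e.
      f = ser_add (ser_add (ser_const a) (ser_smult d (ser_var 0))) (ser_smult e (ser_var 1)) \<and>
      g = ser_sub (ser_add (ser_const b) (ser_smult c (ser_var 0))) (ser_smult d (ser_var 1))}"

end

theory Submission
  imports Defs "HOL-Library.FuncSet"
begin

text \<open>
Three of the generators
already lead to a contradiction.

  \<^item> The scaling field xp - yq prolongs to x d/dx - \<Sum>k (k+1) y^(k) d/dy^(k), which
    multiplies each monomial by (its x-degree) - (its weight), where y^(k) has weight
    k+1.  Together with a division lemma (a multiple P*B whose coefficients vanish at
    all monomials containing y^(m) is zero) this forces Q0 to be isobaric: every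
    monomial c of Q0 has weight(c) - deg_x(c) = m+1, the weight of y^(m).
  \<^item> If m \<ge> 3, the coefficient of y'' y^(m-1) in yp(P) is a negative integer (computed
    from an explicit recursion for the prolongation coefficients of yp), while the
    isobaric property makes the corresponding coefficient of any multiple P*B vanish.
  \<^item> If m = 2, invariance under the translations p and q shows that Q0 involves
    neither x nor y; isobaricity then asks for 3 = 2 deg_y'(c), so Q0 = 0 and P = y''.
    But then xp is a symmetry of P although it is not in the span.
\<close>


subsection \<open>Monomials\<close>

abbreviation z :: "nat \<Rightarrow> nat \<Rightarrow>\<^sub>0 nat" where "z i \<equiv> Poly_Mapping.single i (Suc 0)"
abbreviation expo :: "(nat \<Rightarrow>\<^sub>0 nat) \<Rightarrow> nat \<Rightarrow> nat" where "expo mon i \<equiv> Poly_Mapping.lookup mon i"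

lemma expo_single[simp]: "expo (z i) j = (if i = j then 1 else 0)"
  by (simp add: lookup_single when_def)

lemma expo_add[simp]: "expo (a + b) j = expo a j + expo b j"
  by (simp add: lookup_add)

lemma expo_minus[simp]: "expo (a - b) j = expo a j - expo b j"
  by (simp add: lookup_minus)

lemma monomial_eq_iff: "(a = b) \<longleftrightarrow> (\<forall>j. expo a j = expo b j)"
  using poly_mapping_eqI by auto

lemma add_z_eq_z_iff: "(mon + z i = z j) \<longleftrightarrow> (i = j \<and> mon = 0)"
proof
  assume h: "mon + z i = z j"
  then have "expo (mon + z i) i = expo (z j) i" by simp
  then have ij: "i = j" by (simp split: if_splits)
  have "expo mon k = 0" for k
    using arg_cong[OF h, of "\<lambda>a. expo a k"] ij by (simp split: if_splits)
  then show "i = j \<and> mon = 0" using ij by (simp add: monomial_eq_iff)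
qed auto

lemma sub_z_add: "0 < expo mon i \<Longrightarrow> mon - z i + z i = mon"
  by (simp add: monomial_eq_iff)

lemma z_add_sub_iff: "z i + (mon - z i) = mon \<longleftrightarrow> 0 < expo mon i"
proof
  assume "z i + (mon - z i) = mon"
  then have "expo (z i + (mon - z i)) i = expo mon i" by simp
  then show "0 < expo mon i" by simp
qed (simp add: monomial_eq_iff)

lemma finite_splittings:
  fixes m :: "nat \<Rightarrow>\<^sub>0 nat"
  shows "finite {p::(nat \<Rightarrow>\<^sub>0 nat) \<times> (nat \<Rightarrow>\<^sub>0 nat). fst p + snd p = m}"
proof -
  let ?A = "{a::nat \<Rightarrow>\<^sub>0 nat. \<forall>k. expo a k \<le> expo m k}"
  let ?r = "\<lambda>a. restrict (expo a) (Poly_Mapping.keys m)"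
  have "inj_on ?r ?A"
  proof (rule inj_onI)
    fix a b assume a: "a \<in> ?A" and b: "b \<in> ?A" and e: "?r a = ?r b"
    show "a = b"
    proof (rule poly_mapping_eqI)
      fix k show "expo a k = expo b k"
      proof (cases "k \<in> Poly_Mapping.keys m")
        case True
        then show ?thesis using fun_cong[OF e, of k] by simp
      next
        case False then have "expo m k = 0" by (simp add: in_keys_iff)
        then show ?thesis using a b by (metis le_zero_eq mem_Collect_eq)
      qed
    qed
  qed
  moreover have "?r ` ?A \<subseteq> PiE (Poly_Mapping.keys m) (\<lambda>k. {0..expo m k})"
    by auto
  then have "finite (?r ` ?A)"
    by (rule finite_subset) (auto intro: finite_PiE)
  ultimately have "finite ?A" using finite_imageD by blast
  moreover have "{p. fst p + snd p = m} \<subseteq> (\<lambda>a. (a, m - a)) ` ?A"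
  proof
    fix p :: "(nat \<Rightarrow>\<^sub>0 nat) \<times> (nat \<Rightarrow>\<^sub>0 nat)" assume "p \<in> {p. fst p + snd p = m}"
    then have e: "fst p + snd p = m" by simp
    then have "fst p \<in> ?A" by auto
    moreover have "p = (fst p, m - fst p)" using e by auto
    ultimately show "p \<in> (\<lambda>a. (a, m - a)) ` ?A" by blast
  qed
  ultimately show ?thesis by (meson finite_imageI finite_subset)
qed


lemma ser_mult_comm: "ser_mult f g = ser_mult g f"
  unfolding ser_mult_def
proof (rule ext)
  fix m :: "nat \<Rightarrow>\<^sub>0 nat"
  show "(\<Sum>p\<in>{p. fst p + snd p = m}. f (fst p) * g (snd p)) =
        (\<Sum>p\<in>{p. fst p + snd p = m}. g (fst p) * f (snd p))"
    by (rule sum.reindex_bij_witness[where i = "\<lambda>(a,b). (b,a)" and j = "\<lambda>(a,b). (b,a)"])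
       (auto simp: add.commute mult.commute)
qed

lemma sum_splittings_single:
  fixes h :: "(nat \<Rightarrow>\<^sub>0 nat) \<times> (nat \<Rightarrow>\<^sub>0 nat) \<Rightarrow> 'a::field"
  assumes "\<And>p. fst p + snd p = mon \<Longrightarrow> p \<noteq> q \<Longrightarrow> h p = 0"
  shows "(\<Sum>p\<in>{p. fst p + snd p = mon}. h p) = (if fst q + snd q = mon then h q else 0)"
proof -
  have "(\<Sum>p\<in>{p. fst p + snd p = mon}. h p) =
        (\<Sum>p\<in>{p. fst p + snd p = mon}. if p = q then h q else 0)"
    by (rule sum.cong) (use assms in auto)
  also have "\<dots> = (if fst q + snd q = mon then h q else 0)"
    using sum.delta[OF finite_splittings, where a = q and b = "\<lambda>_. h q"] by simp
  finally show ?thesis .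
qed

lemma coeff_var: "ser_var i mon = (if mon = z i then (1::'a::field) else 0)"
  by (simp add: ser_var_def One_nat_def)

lemma coeff_var_mult:
  "ser_mult (ser_var i) h mon = (if 0 < expo mon i then h (mon - z i) else (0::'a::field))"
proof -
  have "ser_mult (ser_var i) h mon =
        (\<Sum>p\<in>{p. fst p + snd p = mon}. (if fst p = z i then 1 else 0) * h (snd p))"
    by (simp add: ser_mult_def coeff_var)
  also have "\<dots> = (if z i + (mon - z i) = mon then h (mon - z i) else 0)"
    by (subst sum_splittings_single[where q = "(z i, mon - z i)"]) (auto simp: add_diff_cancel_left')
  also have "\<dots> = (if 0 < expo mon i then h (mon - z i) else 0)"
    by (simp only: z_add_sub_iff)
  finally show ?thesis .
qed

lemma coeff_mult_var:
  "ser_mult h (ser_var i) mon = (if 0 < expo mon i then h (mon - z i) else (0::'a::field))"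
  by (subst ser_mult_comm) (rule coeff_var_mult)

lemma coeff_const_mult: "ser_mult (ser_const c) h mon = c * (h mon :: 'a::field)"
proof -
  have "ser_mult (ser_const c) h mon =
        (\<Sum>p\<in>{p. fst p + snd p = mon}. (if fst p = 0 then c else 0) * h (snd p))"
    by (simp add: ser_mult_def ser_const_def)
  also have "\<dots> = c * h mon"
    by (subst sum_splittings_single[where q = "(0, mon)"]) auto
  finally show ?thesis .
qed

lemma coeff_mult_const: "ser_mult h (ser_const c) mon = c * (h mon :: 'a::field)"
  by (subst ser_mult_comm) (rule coeff_const_mult)

lemma coeff_mult_zero: "ser_mult f (\<lambda>_. 0) mon = (0::'a::field)"
  by (simp add: ser_mult_def)

lemma coeff_zero_mult: "ser_mult (\<lambda>_. 0) f mon = (0::'a::field)"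
  by (simp add: ser_mult_def)

lemma coeff_ser_zero_mult: "ser_mult ser_zero f mon = (0::'a::field)"
  by (simp add: ser_mult_def ser_zero_def)

lemma coeff_sub_mult: "ser_mult (ser_sub f g) h mon = ser_mult f h mon - ser_mult g h mon"
  by (simp add: ser_mult_def ser_sub_def left_diff_distrib sum_subtractf)

lemma coeff_mult_add: "ser_mult h (ser_add f g) mon = ser_mult h f mon + ser_mult h g mon"
  by (simp add: ser_mult_def ser_add_def distrib_left sum.distrib)

lemma coeff_smult_mult: "ser_mult (ser_smult c f) h mon = c * ser_mult f h mon"
  by (simp add: ser_mult_def ser_smult_def sum_distrib_left mult.assoc)

lemma coeff_pd: "ser_pd i f mon = of_nat (expo mon i + 1) * f (mon + z i)"
  by (simp add: ser_pd_def)

lemma coeff_var_mult_pd: "ser_mult (ser_var i) (ser_pd i h) mon = of_nat (expo mon i) * (h mon :: 'a::field)"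
  by (auto simp: coeff_var_mult coeff_pd sub_z_add)

lemma pd_zero: "ser_pd i (\<lambda>_. (0::'a::field)) = (\<lambda>_. 0)"
  by (simp add: ser_pd_def)

lemma pd_const: "ser_pd i (ser_const c) = (\<lambda>_. (0::'a::field))"
proof (rule ext)
  fix mon :: "nat \<Rightarrow>\<^sub>0 nat"
  have "mon + z i \<noteq> 0"
  proof
    assume "mon + z i = 0"
    then have "expo (mon + z i) i = expo 0 i" by simp
    then show False by simp
  qed
  then show "ser_pd i (ser_const c) mon = 0" by (simp add: coeff_pd ser_const_def)
qed

lemma pd_var: "ser_pd i (ser_var j) = (if i = j then ser_const 1 else (\<lambda>_. (0::'a::field)))"
  by (auto simp: ser_pd_def ser_var_def add_z_eq_z_iff ser_const_def One_nat_def)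

lemma coeff_Dx: "Dx h mon = of_nat (expo mon 0 + 1) * h (mon + z 0) +
   (\<Sum>k\<in>{k. expo mon (Suc (Suc k)) \<noteq> 0}.
      of_nat (expo (mon - z (Suc (Suc k))) (Suc k) + 1) * (h (mon - z (Suc (Suc k)) + z (Suc k)) :: 'a::field))"
  unfolding Dx_def
  by (rule arg_cong2[where f = "(+)"]) (auto simp: coeff_pd coeff_var_mult intro!: sum.cong)

lemma finite_Dx_index: "finite {k. expo mon (Suc (Suc k)) \<noteq> 0}"
  by (rule finite_subset[of _ "(\<lambda>k. k - 2) ` Poly_Mapping.keys mon"])
     (auto simp: in_keys_iff image_iff intro!: bexI[where x="Suc (Suc _)"])

lemma Dx_zero: "Dx (\<lambda>_. (0::'a::field)) = (\<lambda>_. 0)"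
  by (simp add: Dx_def pd_zero coeff_mult_zero)

lemma Dx_const: "Dx (ser_const c) = (\<lambda>_. (0::'a::field))"
  by (simp add: Dx_def pd_const coeff_mult_zero)

lemma Dx_smult: "Dx (ser_smult c h) mon = c * (Dx h mon :: 'a::field)"
  by (simp add: Dx_def ser_pd_def ser_smult_def ser_mult_def sum_distrib_left distrib_left mult.left_commute)

lemma Dx_var: "Dx (ser_var (Suc i)) mon = (ser_var (Suc (Suc i)) mon :: 'a::field)"
proof -
  have "Dx (ser_var (Suc i)) mon =
        (\<Sum>k\<in>{k. expo mon (Suc (Suc k)) \<noteq> 0}. if k = i then (ser_var (Suc (Suc i)) mon :: 'a) else 0)"
    unfolding Dx_def by (auto simp: pd_var coeff_mult_const coeff_mult_zero intro!: sum.cong)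
  also have "\<dots> = (if i \<in> {k. expo mon (Suc (Suc k)) \<noteq> 0} then ser_var (Suc (Suc i)) mon else 0)"
    using finite_Dx_index by (rule sum.delta)
  also have "\<dots> = ser_var (Suc (Suc i)) mon"
    by (simp add: coeff_var)
  finally show ?thesis .
qed

lemma in_A_const: "in_A (ser_const c)"
proof -
  have "{m. ser_const c m \<noteq> 0} \<subseteq> {0}" by (auto simp: ser_const_def split: if_splits)
  then have "finite {m. ser_const c m \<noteq> 0}" by (rule finite_subset) simp
  then show ?thesis unfolding in_A_def by simp
qed

lemma in_A_add_const: "in_A B \<Longrightarrow> in_A (ser_add B (ser_const c))"
proof -
  assume B: "in_A B"
  let ?R = "\<lambda>m. (\<lambda>i. if 2 \<le> i then expo m i else 0)"
  have "?R ` {m. ser_add B (ser_const c) m \<noteq> 0} \<subseteq> insert (?R 0) (?R ` {m. B m \<noteq> 0})"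
    by (auto simp: ser_add_def ser_const_def split: if_splits)
  moreover have "finite (insert (?R 0) (?R ` {m. B m \<noteq> 0}))" using B by (simp add: in_A_def)
  ultimately show ?thesis unfolding in_A_def by (rule finite_subset)
qed


subsection \<open>The polynomial P = y^(m) - Q0\<close>

text \<open>y^(m) is the variable z_(m+1).  Q0 is of lower order if it does not involve
y^(i) for i \<ge> m.\<close>

abbreviation ode_poly :: "nat \<Rightarrow> 'a::field ser \<Rightarrow> 'a ser" where
  "ode_poly m Q0 \<equiv> ser_sub (ser_var (Suc m)) Q0"

definition lower_order :: "nat \<Rightarrow> 'a::field ser \<Rightarrow> bool" where
  "lower_order m Q0 \<longleftrightarrow> (\<forall>mon. Q0 mon \<noteq> 0 \<longrightarrow> (\<forall>i\<ge>m. expo mon (Suc i) = 0))"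

lemma lower_order_D: "lower_order m Q0 \<Longrightarrow> m \<le> i \<Longrightarrow> 0 < expo mon (Suc i) \<Longrightarrow> Q0 mon = 0"
  unfolding lower_order_def by force

lemma coeff_ode_poly: "ode_poly m Q0 mon = (if mon = z (Suc m) then (1::'a::field) else 0) - Q0 mon"
  by (simp add: ser_sub_def coeff_var)

lemma coeff_ode_poly_Q0:
  assumes "lower_order m Q0" "Q0 c \<noteq> 0"
  shows "ode_poly m Q0 c = - (Q0 c :: 'a::field)"
proof -
  have "expo c (Suc m) = 0" using assms by (auto simp: lower_order_def)
  then show ?thesis by (auto simp: coeff_ode_poly)
qed

lemma pd_ode_poly_above:
  assumes "lower_order m (Q0::'a::field ser)" "m < k"
  shows "ser_pd (Suc k) (ode_poly m Q0) = ser_zero"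
proof (rule ext)
  fix mon
  have "mon + z (Suc k) \<noteq> z (Suc m)" using assms(2) by (simp add: add_z_eq_z_iff)
  then show "ser_pd (Suc k) (ode_poly m Q0) mon = ser_zero mon"
    using lower_order_D[OF assms(1), of k "mon + z (Suc k)"] assms(2)
    by (simp add: coeff_pd coeff_ode_poly ser_zero_def)
qed

lemma pd_ode_poly_top:
  assumes "lower_order m (Q0::'a::field ser)"
  shows "ser_pd (Suc m) (ode_poly m Q0) = ser_const 1"
proof (rule ext)
  fix mon
  show "ser_pd (Suc m) (ode_poly m Q0) mon = ser_const 1 mon"
    using lower_order_D[OF assms, of m "mon + z (Suc m)"]
    by (simp add: coeff_pd coeff_ode_poly add_z_eq_z_iff ser_const_def)
qed

lemma pd_ode_poly_below:
  assumes "k < m"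
  shows "ser_pd (Suc k) (ode_poly m Q0) mon = - ser_pd (Suc k) (Q0::'a::field ser) mon"
  using assms by (simp add: coeff_pd coeff_ode_poly add_z_eq_z_iff)

lemma prol_ode_poly:
  assumes "lower_order m (Q0::'a::field ser)"
  shows "prol f g (ode_poly m Q0) mon =
    ser_mult f (ser_pd 0 (ode_poly m Q0)) mon +
    (\<Sum>k\<le>m. ser_mult (prolPhi f g k) (ser_pd (Suc k) (ode_poly m Q0)) mon)"
proof -
  let ?S = "{k. ser_pd (Suc k) (ode_poly m Q0) \<noteq> ser_zero}"
  have "?S \<subseteq> {..m}" using pd_ode_poly_above[OF assms] by (auto simp: not_le[symmetric])
  then have "(\<Sum>k\<in>?S. ser_mult (prolPhi f g k) (ser_pd (Suc k) (ode_poly m Q0)) mon) =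
             (\<Sum>k\<le>m. ser_mult (prolPhi f g k) (ser_pd (Suc k) (ode_poly m Q0)) mon)"
    by (intro sum.mono_neutral_left) (auto simp: ser_mult_def ser_zero_def)
  then show ?thesis by (simp add: prol_def)
qed


subsection \<open>The division lemma\<close>

text \<open>If b0 has maximal y^(m)-degree among the monomials of B, then the coefficient of
y^(m) b0 in P*B is B b0: the term Q0*B cannot reach that degree.\<close>

lemma coeff_ode_poly_mult_top:
  assumes Q: "lower_order m (Q0::'a::field ser)"
    and top: "\<And>b. B b \<noteq> 0 \<Longrightarrow> expo b (Suc m) \<le> expo b0 (Suc m)"
  shows "ser_mult (ode_poly m Q0) B (b0 + z (Suc m)) = B b0"
proof -
  let ?mon = "b0 + z (Suc m)"
  have "ser_mult Q0 B ?mon = 0"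
    unfolding ser_mult_def
  proof (rule sum.neutral, rule ballI)
    fix p assume p: "p \<in> {p. fst p + snd p = ?mon}"
    show "Q0 (fst p) * B (snd p) = 0"
    proof (cases "Q0 (fst p) = 0")
      case False
      then have "expo (fst p) (Suc m) = 0" using Q by (auto simp: lower_order_def)
      moreover have "expo (fst p) (Suc m) + expo (snd p) (Suc m) = expo b0 (Suc m) + 1"
      proof -
        have "fst p + snd p = ?mon" using p by simp
        then have "expo (fst p + snd p) (Suc m) = expo ?mon (Suc m)" by simp
        then show ?thesis by simp
      qed
      ultimately have "B (snd p) = 0" using top[of "snd p"] by fastforce
      then show ?thesis by simp
    qed simp
  qed
  then show ?thesis by (simp add: coeff_sub_mult coeff_var_mult)
qed

text \<open>The hypothesis B \<in> A guarantees that the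
y^(m)-degrees of the monomials of B are bounded (this needs m \<ge> 1).\<close>

lemma multiple_vanishing_off_top:
  assumes Q: "lower_order m (Q0::'a::field ser)" and m1: "1 \<le> m" and B: "in_A B"
    and H0: "\<And>mon. 0 < expo mon (Suc m) \<Longrightarrow> H mon = 0"
    and HP: "\<And>mon. H mon = ser_mult (ode_poly m Q0) B mon"
  shows "H mon = 0"
proof -
  have "B b = 0" for b
  proof (rule ccontr)
    assume "B b \<noteq> 0"
    then have ne: "{b. B b \<noteq> 0} \<noteq> {}" by auto
    let ?R = "\<lambda>m. (\<lambda>i. if 2 \<le> i then expo m i else 0)"
    let ?E = "(\<lambda>b. expo b (Suc m)) ` {b. B b \<noteq> 0}"
    have "?E = (\<lambda>r. r (Suc m)) ` (?R ` {b. B b \<noteq> 0})"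
      using m1 by (auto simp: image_image)
    moreover have "finite (?R ` {b. B b \<noteq> 0})" using B by (simp add: in_A_def)
    ultimately have fin: "finite ?E" by simp
    then have "Max ?E \<in> ?E" using ne by (intro Max_in) auto
    then obtain b0 where b0: "B b0 \<noteq> 0" "expo b0 (Suc m) = Max ?E" by auto
    have "B b0 = H (b0 + z (Suc m))"
      using coeff_ode_poly_mult_top[OF Q, of B b0] fin b0(2) HP by simp
    also have "\<dots> = 0" by (rule H0) simp
    finally show False using b0(1) by simp
  qed
  then show ?thesis using HP[of mon] by (simp add: ser_mult_def)
qed


subsection \<open>Prolongations of the generators\<close>

lemma prolQ_const: "prolQ (ser_const c) = (\<lambda>_. (0::'a::field))"
  by (simp add: prolQ_def pd_const ser_sub_def ser_neg_def coeff_zero_mult)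

lemma prolQ_zero: "prolQ (\<lambda>_. 0) = (\<lambda>_. (0::'a::field))"
  by (simp add: prolQ_def pd_zero ser_sub_def ser_neg_def coeff_zero_mult)

lemma prolQ_x: "prolQ (ser_var 0) = ser_const (-1::'a::field)"
  by (rule ext) (simp add: prolQ_def pd_var ser_sub_def ser_neg_def coeff_zero_mult ser_const_def)

lemma prolQ_y: "prolQ (ser_var (Suc 0)) mon = - (ser_var 2 mon :: 'a::field)"
  by (simp add: prolQ_def pd_var ser_sub_def ser_neg_def coeff_zero_mult coeff_const_mult)

lemma prolPhi_p: "prolPhi (ser_const c) ser_zero k = (ser_zero :: 'a::field ser)"
  by (induction k) (simp_all add: ser_zero_def Dx_zero prolQ_const ser_add_def coeff_zero_mult)

lemma prolPhi_q: "prolPhi ser_zero (ser_const c) k = (if k = 0 then ser_const c else (ser_zero :: 'a::field ser))"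
  by (induction k) (auto simp: ser_zero_def Dx_zero Dx_const prolQ_zero ser_add_def coeff_zero_mult)

lemma prolPhi_scaling:
  "prolPhi (ser_var 0) (ser_smult (-1) (ser_var (Suc 0))) k = ser_smult (- of_nat (Suc k)) (ser_var (Suc k) :: 'a::field ser)"
proof (induction k)
  case (Suc k)
  show ?case
    by (rule ext, simp only: prolPhi.simps ser_add_def Dx_smult Dx_var prolQ_x coeff_const_mult Suc)
       (simp add: ser_smult_def algebra_simps)
qed simp

lemma prolPhi_xp: "prolPhi (ser_var 0) ser_zero k = ser_smult (- of_nat k) (ser_var (Suc k) :: 'a::field ser)"
proof (induction k)
  case 0 then show ?case by (simp add: ser_smult_def ser_zero_def)
next
  case (Suc k)
  show ?case
    by (rule ext, simp only: prolPhi.simps ser_add_def Dx_smult Dx_var prolQ_x coeff_const_mult Suc)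
       (simp add: ser_smult_def algebra_simps)
qed

abbreviation phi_yp :: "nat \<Rightarrow> 'a::field ser" where
  "phi_yp k \<equiv> prolPhi (ser_var (Suc 0)) ser_zero k"

lemma coeff_Qy_mult_var: "ser_mult (prolQ (ser_var (Suc 0))) (ser_var k) mon =
   (if 0 < expo mon k \<and> mon - z k = z 2 then -1 else (0::'a::field))"
  by (simp add: coeff_mult_var prolQ_y coeff_var)

lemma phi_yp_Suc: "phi_yp (Suc k) mon =
  Dx (phi_yp k) mon + ser_mult (prolQ (ser_var (Suc 0))) (ser_var (Suc (Suc k))) mon"
  by (simp add: ser_add_def)

declare prolPhi.simps(2)[simp del]

definition avoids :: "nat \<Rightarrow> 'a::field ser \<Rightarrow> bool" where
  "avoids j h \<longleftrightarrow> (\<forall>mon. h mon \<noteq> 0 \<longrightarrow> expo mon j = 0)"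

lemma avoids_Dx:
  assumes a: "avoids j (h::'a::field ser)" and b: "2 \<le> j \<Longrightarrow> avoids (j - 1) h"
  shows "avoids j (Dx h)"
  unfolding avoids_def
proof (intro allI impI, rule ccontr)
  fix mon assume nz: "Dx h mon \<noteq> 0" and lj: "expo mon j \<noteq> 0"
  have t1: "h (mon + z 0) = 0"
    using a lj unfolding avoids_def by fastforce
  have t2: "h (mon - z (Suc (Suc k)) + z (Suc k)) = 0" if k: "expo mon (Suc (Suc k)) \<noteq> 0" for k
  proof (rule ccontr)
    assume hnz: "h (mon - z (Suc (Suc k)) + z (Suc k)) \<noteq> 0"
    then have e: "expo (mon - z (Suc (Suc k)) + z (Suc k)) j = 0" using a unfolding avoids_def by blast
    show False
    proof (cases "j = Suc (Suc k)")
      case True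
      then have "avoids (Suc k) h" using b by simp
      then have "expo (mon - z (Suc (Suc k)) + z (Suc k)) (Suc k) = 0" using hnz unfolding avoids_def by blast
      then show False by simp
    qed (use e lj in \<open>simp split: if_splits\<close>)
  qed
  have "Dx h mon = 0" by (simp add: coeff_Dx t1 t2)
  then show False using nz by simp
qed

lemma phi_yp_avoids: "j = 0 \<or> j = 1 \<or> Suc k < j \<Longrightarrow> avoids j (phi_yp k :: 'a::field ser)"
proof (induction k arbitrary: j)
  case 0 then show ?case by (simp add: avoids_def ser_zero_def)
next
  case (Suc k)
  have Dx_avoids: "avoids j (Dx (phi_yp k :: 'a ser))"
  proof (rule avoids_Dx)
    show "avoids j (phi_yp k :: 'a ser)" using Suc by auto
    assume "2 \<le> j" then show "avoids (j - 1) (phi_yp k :: 'a ser)" using Suc.prems by (intro Suc.IH) auto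
  qed
  show ?case unfolding avoids_def
  proof (intro allI impI)
    fix mon assume nz: "(phi_yp (Suc k) :: 'a ser) mon \<noteq> 0"
    show "expo mon j = 0"
    proof (cases "(Dx (phi_yp k) mon :: 'a) = 0")
      case True
      then have "(phi_yp (Suc k) mon :: 'a) = ser_mult (prolQ (ser_var (Suc 0))) (ser_var (Suc (Suc k))) mon"
        using phi_yp_Suc[of k mon, where 'a='a] by simp
      with nz have "ser_mult (prolQ (ser_var (Suc 0))) (ser_var (Suc (Suc k))) mon \<noteq> (0::'a)"
        by simp
      then have "0 < expo mon (Suc (Suc k))" "mon - z (Suc (Suc k)) = z 2"
        by (auto simp: coeff_Qy_mult_var split: if_splits)
      then have "mon = z 2 + z (Suc (Suc k))" by (metis sub_z_add)
      then show ?thesis using Suc.prems by auto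
    next
      case False then show ?thesis using Dx_avoids unfolding avoids_def by blast
    qed
  qed
qed

lemma phi_yp_avoids_coeff:
  assumes "j = 0 \<or> j = 1 \<or> Suc k < j" and "expo mon j \<noteq> 0"
  shows "(phi_yp k mon :: 'a::field) = 0"
proof -
  have "avoids j (phi_yp k :: 'a ser)" using assms(1) by (rule phi_yp_avoids)
  then have "(phi_yp k mon :: 'a) \<noteq> 0 \<longrightarrow> expo mon j = 0" unfolding avoids_def by (rule spec)
  then show ?thesis using assms(2) by blast
qed

lemma coeff_Dx_phi_yp: "Dx (phi_yp k) mon = (\<Sum>j\<in>{j. j \<noteq> 0 \<and> expo mon (Suc (Suc j)) \<noteq> 0}.
   of_nat (expo (mon - z (Suc (Suc j))) (Suc j) + 1) * (phi_yp k (mon - z (Suc (Suc j)) + z (Suc j)) :: 'a::field))"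
proof -
  have "(phi_yp k (mon + z 0) :: 'a) = 0" by (rule phi_yp_avoids_coeff[of 0]) auto
  then have "Dx (phi_yp k) mon = (\<Sum>j\<in>{j. expo mon (Suc (Suc j)) \<noteq> 0}.
   of_nat (expo (mon - z (Suc (Suc j))) (Suc j) + 1) * (phi_yp k (mon - z (Suc (Suc j)) + z (Suc j)) :: 'a::field))"
    by (simp add: coeff_Dx)
  also have "\<dots> = (\<Sum>j\<in>{j. j \<noteq> 0 \<and> expo mon (Suc (Suc j)) \<noteq> 0}.
   of_nat (expo (mon - z (Suc (Suc j))) (Suc j) + 1) * (phi_yp k (mon - z (Suc (Suc j)) + z (Suc j)) :: 'a::field))"
  proof (rule sum.mono_neutral_right)
    show "finite {j. expo mon (Suc (Suc j)) \<noteq> 0}" by (rule finite_Dx_index)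
    show "\<forall>i\<in>{j. expo mon (Suc (Suc j)) \<noteq> 0} - {j. j \<noteq> 0 \<and> expo mon (Suc (Suc j)) \<noteq> 0}.
       of_nat (expo (mon - z (Suc (Suc i))) (Suc i) + 1) * (phi_yp k (mon - z (Suc (Suc i)) + z (Suc i)) :: 'a) = 0"
    proof
      fix i assume "i \<in> {j. expo mon (Suc (Suc j)) \<noteq> 0} - {j. j \<noteq> 0 \<and> expo mon (Suc (Suc j)) \<noteq> 0}"
      then have "i = 0" by auto
      moreover have "(phi_yp k (mon - z (Suc (Suc 0)) + z (Suc 0)) :: 'a) = 0"
        by (rule phi_yp_avoids_coeff[of 1]) auto
      ultimately show "of_nat (expo (mon - z (Suc (Suc i))) (Suc i) + 1) *
          (phi_yp k (mon - z (Suc (Suc i)) + z (Suc i)) :: 'a) = 0" by simp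
    qed
  qed auto
  finally show ?thesis .
qed

lemma phi_yp_z2_Suc:
  assumes k: "1 \<le> k"
  shows "(phi_yp (Suc k) (z 2 + z (Suc (Suc k))) :: 'a::field) =
         (if k = 1 then 2 else 1) * phi_yp k (z 2 + z (Suc k)) + (- 1)"
proof -
  let ?mon = "z 2 + z (Suc (Suc k))"
  have T: "{j. j \<noteq> 0 \<and> expo ?mon (Suc (Suc j)) \<noteq> 0} = {k}" using k by auto
  have m1: "?mon - z (Suc (Suc k)) = z 2" by (simp add: monomial_eq_iff)
  have m2: "?mon - z (Suc (Suc k)) + z (Suc k) = z 2 + z (Suc k)" by (simp add: monomial_eq_iff)
  have cf: "(of_nat (expo (z 2) (Suc k) + 1) :: 'a) = (if k = 1 then 2 else 1)" by auto
  have A: "(Dx (phi_yp k) ?mon :: 'a) = (if k = 1 then 2 else 1) * phi_yp k (z 2 + z (Suc k))"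
    by (simp only: coeff_Dx_phi_yp T m1 m2) (simp add: cf)
  have B: "ser_mult (prolQ (ser_var (Suc 0))) (ser_var (Suc (Suc k))) ?mon = (-1::'a)"
    by (simp add: coeff_Qy_mult_var m1)
  have "(phi_yp (Suc k) ?mon :: 'a) =
        Dx (phi_yp k) ?mon + ser_mult (prolQ (ser_var (Suc 0))) (ser_var (Suc (Suc k))) ?mon"
    by (rule phi_yp_Suc)
  then show ?thesis by (simp only: A B)
qed

lemma phi_yp_one_z2: "(phi_yp (Suc 0) (z 2 + z (Suc (Suc 0))) :: 'a::field) = - 1"
proof -
  let ?mon = "z 2 + z (Suc (Suc 0))"
  have m1: "?mon - z (Suc (Suc 0)) = z 2" by (simp add: monomial_eq_iff)
  have A: "(Dx (phi_yp 0) ?mon :: 'a) = 0" by (simp add: ser_zero_def Dx_zero)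
  have B: "ser_mult (prolQ (ser_var (Suc 0))) (ser_var (Suc (Suc 0))) ?mon = (-1::'a)"
    by (simp add: coeff_Qy_mult_var m1)
  have "(phi_yp (Suc 0) ?mon :: 'a) =
        Dx (phi_yp 0) ?mon + ser_mult (prolQ (ser_var (Suc 0))) (ser_var (Suc (Suc 0))) ?mon"
    by (rule phi_yp_Suc)
  then show ?thesis by (simp only: A B add_0_left)
qed

lemma phi_yp_two_z2: "(phi_yp 2 (z 2 + z 3) :: 'a::field) = - 3"
  using phi_yp_z2_Suc[of 1, where 'a='a] phi_yp_one_z2[where 'a='a] by (simp add: numeral_eq_Suc)

lemma phi_yp_z2: "2 \<le> k \<Longrightarrow> (phi_yp k (z 2 + z (Suc k)) :: 'a::field) = - of_nat (Suc k)"
proof (induction k rule: dec_induct)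
  case base then show ?case using phi_yp_two_z2 by (simp add: numeral_eq_Suc)
next
  case (step n)
  have "(phi_yp (Suc n) (z 2 + z (Suc (Suc n))) :: 'a) = phi_yp n (z 2 + z (Suc n)) + (- 1)"
    using phi_yp_z2_Suc[of n, where 'a='a] step.hyps by simp
  then show ?case using step.IH by simp
qed

lemma phi_yp_three_z3: "(phi_yp 3 (z 3 + z 3) :: 'a::field) = - 3"
proof -
  let ?mon = "z 3 + z 3"
  have T: "{j. j \<noteq> 0 \<and> expo ?mon (Suc (Suc j)) \<noteq> 0} = {1}" by auto
  have sum1: "(\<Sum>j\<in>{1}. f j) = f 1" for f :: "nat \<Rightarrow> 'a" by simp
  have h1: "z 3 + z 3 - z (Suc (Suc 1)) + z (Suc 1) = z 2 + z 3" by (simp add: monomial_eq_iff)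
  have h2: "expo (z 3 + z 3 - z (Suc (Suc 1))) (Suc 1) = 0" by simp
  have A: "(Dx (phi_yp 2) ?mon :: 'a) = phi_yp 2 (z 2 + z 3)"
    by (simp only: coeff_Dx_phi_yp T sum1 h1 h2) simp
  have B: "ser_mult (prolQ (ser_var (Suc 0))) (ser_var (Suc (Suc 2))) ?mon = (0::'a)"
    by (simp add: coeff_Qy_mult_var)
  have "(phi_yp (Suc 2) ?mon :: 'a) =
        Dx (phi_yp 2) ?mon + ser_mult (prolQ (ser_var (Suc 0))) (ser_var (Suc (Suc 2))) ?mon"
    by (rule phi_yp_Suc)
  then have "(phi_yp (Suc 2) ?mon :: 'a) = phi_yp 2 (z 2 + z 3)" by (simp only: A B add_0_right)
  then show ?thesis using phi_yp_two_z2 by (simp add: numeral_eq_Suc)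
qed

lemma phi_yp_z3_Suc:
  assumes k: "3 \<le> k"
  shows "(phi_yp (Suc k) (z 3 + z (Suc k)) :: 'a::field) =
         phi_yp k (z 2 + z (Suc k)) + (if k = 3 then 2 else 1) * phi_yp k (z 3 + z k)"
proof -
  let ?mon = "z 3 + z (Suc k)"
  have T: "{j. j \<noteq> 0 \<and> expo ?mon (Suc (Suc j)) \<noteq> 0} = {1, k - 1}" using k by auto
  have sum2: "(\<Sum>j\<in>{1, k - 1}. f j) = f 1 + f (k - 1)" for f :: "nat \<Rightarrow> 'a"
    using k by simp
  have h1: "?mon - z (Suc (Suc 1)) + z (Suc 1) = z 2 + z (Suc k)" using k by (simp add: monomial_eq_iff)
  have h2: "expo (?mon - z (Suc (Suc 1))) (Suc 1) = 0" using k by simp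
  have h3: "?mon - z (Suc (Suc (k - 1))) + z (Suc (k - 1)) = z 3 + z k" using k by (simp add: monomial_eq_iff)
  have h4: "(of_nat (expo (?mon - z (Suc (Suc (k - 1)))) (Suc (k - 1)) + 1) :: 'a) = (if k = 3 then 2 else 1)"
    using k by auto
  have A: "(Dx (phi_yp k) ?mon :: 'a) =
      phi_yp k (z 2 + z (Suc k)) + (if k = 3 then 2 else 1) * phi_yp k (z 3 + z k)"
    by (simp only: coeff_Dx_phi_yp T sum2 h1 h2 h3 h4) simp
  have B: "ser_mult (prolQ (ser_var (Suc 0))) (ser_var (Suc (Suc k))) ?mon = (0::'a)"
    using k by (simp add: coeff_Qy_mult_var)
  have "(phi_yp (Suc k) ?mon :: 'a) =
        Dx (phi_yp k) ?mon + ser_mult (prolQ (ser_var (Suc 0))) (ser_var (Suc (Suc k))) ?mon"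
    by (rule phi_yp_Suc)
  then show ?thesis by (simp only: A B add_0_right)
qed

lemma phi_yp_z3: "3 \<le> k \<Longrightarrow> \<exists>n>0. (phi_yp k (z 3 + z k) :: 'a::field) = - of_nat n"
proof (induction k rule: dec_induct)
  case base then show ?case using phi_yp_three_z3 by (intro exI[of _ 3]) simp
next
  case (step n)
  then obtain p where p: "p > 0" "(phi_yp n (z 3 + z n) :: 'a) = - of_nat p" by blast
  have "(phi_yp n (z 2 + z (Suc n)) :: 'a) = - of_nat (Suc n)" using step.hyps by (intro phi_yp_z2) simp
  then have "(phi_yp (Suc n) (z 3 + z (Suc n)) :: 'a) =
      - of_nat (Suc n) + of_nat (if n = 3 then 2 else 1::nat) * (- of_nat p)"
    using phi_yp_z3_Suc[of n, where 'a='a] step.hyps p(2) by simp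
  also have "\<dots> = - of_nat (Suc n + (if n = 3 then 2 else 1) * p)" by simp
  finally show ?case by blast
qed


subsection \<open>Weight and isobaric equations\<close>

definition weight :: "nat \<Rightarrow> (nat \<Rightarrow>\<^sub>0 nat) \<Rightarrow> nat" where
  "weight m mon = (\<Sum>k\<le>m. Suc k * expo mon (Suc k))"

lemma weight_add: "weight m (a + b) = weight m a + weight m b"
  by (simp add: weight_def sum.distrib algebra_simps)

lemma weight_z: assumes "1 \<le> j" "j \<le> Suc m" shows "weight m (z j) = j"
proof -
  have "weight m (z j) = (\<Sum>k\<in>{..m}. if k = j - 1 then j else 0)"
    unfolding weight_def by (rule sum.cong) (use assms in auto)
  also have "\<dots> = j" using assms by (subst sum.delta) auto
  finally show ?thesis .
qed

lemma weight_ge: assumes "1 \<le> j" "j \<le> Suc m" shows "j * expo b j \<le> weight m b"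
proof -
  have "Suc (j - 1) * expo b (Suc (j - 1)) \<le> (\<Sum>k\<le>m. Suc k * expo b (Suc k))"
    by (rule member_le_sum) (use assms in auto)
  then show ?thesis using assms by (simp add: weight_def)
qed

lemma weight_gap:
  assumes "expo b (Suc 0) = 0" "expo b 2 = 0"
  shows "weight m b = 0 \<or> 3 \<le> weight m b"
proof (rule disjCI)
  assume "\<not> 3 \<le> weight m b"
  show "weight m b = 0"
  proof (rule ccontr)
    assume "weight m b \<noteq> 0"
    then obtain k where k: "k \<le> m" "Suc k * expo b (Suc k) \<noteq> 0" unfolding weight_def
      by (metis (no_types, lifting) atMost_iff sum.neutral)
    have "k \<noteq> 0" using assms k(2) by (intro notI) simp
    moreover have "k \<noteq> 1" using assms k(2) by (intro notI) (simp add: numeral_eq_Suc)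
    ultimately have "k \<noteq> 0" "k \<noteq> 1" by auto
    then have "3 \<le> Suc k * expo b (Suc k)" using k(2) by (cases "expo b (Suc k)") auto
    also have "\<dots> \<le> weight m b" unfolding weight_def by (rule member_le_sum) (use k in auto)
    finally show False using \<open>\<not> 3 \<le> weight m b\<close> by simp
  qed
qed

definition isobaric :: "nat \<Rightarrow> 'a::field ser \<Rightarrow> bool" where
  "isobaric m Q0 \<longleftrightarrow> (\<forall>c. Q0 c \<noteq> 0 \<longrightarrow> expo c 0 + Suc m = weight m c)"


subsection \<open>Consequences of the symmetries p, q and xp - yq\<close>

lemma Lsym_D: "(f, g) \<in> Lsym P \<Longrightarrow> \<exists>B. in_A B \<and> prol f g P = ser_mult P B"
  unfolding Lsym_def by blast

lemma prol_scaling_ode_poly: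
  assumes Q: "lower_order m (Q0::'a::field ser)"
  shows "prol (ser_var 0) (ser_smult (-1) (ser_var (Suc 0))) (ode_poly m Q0) mon =
         (of_nat (expo mon 0) - of_nat (weight m mon)) * ode_poly m Q0 mon"
proof -
  let ?P = "ode_poly m Q0"
  have "prol (ser_var 0) (ser_smult (-1) (ser_var (Suc 0))) ?P mon = of_nat (expo mon 0) * ?P mon +
      (\<Sum>k\<le>m. (- of_nat (Suc k)) * (of_nat (expo mon (Suc k)) * ?P mon))"
    by (simp add: prol_ode_poly[OF Q] prolPhi_scaling coeff_smult_mult coeff_var_mult_pd)
  also have "(\<Sum>k\<le>m. (- of_nat (Suc k)) * (of_nat (expo mon (Suc k)) * ?P mon)) =
             (\<Sum>k\<le>m. - (of_nat (Suc k * expo mon (Suc k)) * ?P mon))"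
    by (intro sum.cong refl) (simp only: of_nat_mult mult.assoc minus_mult_left)
  also have "\<dots> = - ((\<Sum>k\<le>m. of_nat (Suc k * expo mon (Suc k))) * ?P mon)"
    by (simp only: sum_negf sum_distrib_right)
  also have "\<dots> = - of_nat (weight m mon) * ?P mon"
    by (simp only: weight_def of_nat_sum minus_mult_left)
  finally show ?thesis by (simp add: algebra_simps)
qed

text \<open>Invariance under the scaling forces Q0 to be isobaric: the multiplier B can
only differ from the constant -(m+1) by something killed by the division lemma.\<close>

lemma isobaric_from_scaling:
  fixes Q0 :: "'a::field_char_0 ser"
  assumes Q: "lower_order m Q0" and m1: "1 \<le> m"
    and L: "(ser_var 0, ser_smult (-1) (ser_var (Suc 0))) \<in> Lsym (ode_poly m Q0)"
  shows "isobaric m Q0"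
  unfolding isobaric_def
proof (intro allI impI)
  fix c assume c: "Q0 c \<noteq> 0"
  let ?P = "ode_poly m Q0"
  obtain B where B: "in_A B"
    and eq: "prol (ser_var 0) (ser_smult (-1) (ser_var (Suc 0))) ?P = ser_mult ?P B"
    using Lsym_D[OF L] by blast
  let ?H = "\<lambda>mon. (of_nat (expo mon 0) - of_nat (weight m mon) + of_nat (Suc m)) * ?P mon"
  have H0: "?H mon = 0" for mon
  proof (rule multiple_vanishing_off_top[OF Q m1 in_A_add_const[OF B, of "of_nat (Suc m)"]])
    fix mon :: "nat \<Rightarrow>\<^sub>0 nat" assume pos: "0 < expo mon (Suc m)"
    show "?H mon = 0"
    proof (cases "mon = z (Suc m)")
      case True
      then show ?thesis using weight_z[of "Suc m" m] by simp
    next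
      case False
      then have "?P mon = 0" using lower_order_D[OF Q, of m mon] pos by (simp add: coeff_ode_poly)
      then show ?thesis by simp
    qed
  next
    fix mon
    have "ser_mult ?P B mon = (of_nat (expo mon 0) - of_nat (weight m mon)) * ?P mon"
      using prol_scaling_ode_poly[OF Q, of mon] eq by simp
    then show "?H mon = ser_mult ?P (ser_add B (ser_const (of_nat (Suc m)))) mon"
      by (simp add: coeff_mult_add coeff_mult_const algebra_simps)
  qed
  have "?H c = 0" by (rule H0)
  moreover have "?P c \<noteq> 0" using coeff_ode_poly_Q0[OF Q c] c by simp
  ultimately have "of_nat (expo c 0) - of_nat (weight m c) + of_nat (Suc m) = (0::'a)" by simp
  then have "(of_nat (expo c 0 + Suc m) :: 'a) = of_nat (weight m c)" by (simp add: algebra_simps)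
  then show "expo c 0 + Suc m = weight m c" using of_nat_eq_iff by blast
qed

text \<open>If a partial derivative d/dz_i P (i \<noteq> m+1) is a multiple of P, then Q0 does not
involve z_i; this is how the translations p and q are used.\<close>

lemma translation_invariance:
  fixes Q0 :: "'a::field_char_0 ser"
  assumes Q: "lower_order m Q0" and m1: "1 \<le> m" and i: "i \<noteq> Suc m" and B: "in_A B"
    and eq: "ser_pd i (ode_poly m Q0) = ser_mult (ode_poly m Q0) B"
    and c: "Q0 c \<noteq> 0"
  shows "expo c i = 0"
proof (rule ccontr)
  let ?P = "ode_poly m Q0"
  assume "expo c i \<noteq> 0"
  then have pos: "0 < expo c i" by simp
  have H: "ser_pd i ?P mon = 0" for mon
  proof (rule multiple_vanishing_off_top[OF Q m1 B])
    fix mon :: "nat \<Rightarrow>\<^sub>0 nat" assume pos: "0 < expo mon (Suc m)"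
    have "mon + z i \<noteq> z (Suc m)" using i by (simp add: add_z_eq_z_iff)
    moreover have "Q0 (mon + z i) = 0" using lower_order_D[OF Q, of m "mon + z i"] pos by simp
    ultimately show "ser_pd i ?P mon = 0" by (simp add: coeff_pd coeff_ode_poly)
  qed (simp add: eq)
  have "ser_pd i ?P (c - z i) = of_nat (expo c i) * ?P c"
    using pos by (simp add: coeff_pd sub_z_add)
  then have "?P c = 0" using H pos by simp
  then show False using coeff_ode_poly_Q0[OF Q c] c by simp
qed


subsection \<open>Order at least 3: yp is not a symmetry\<close>

lemma splitting_z3_zm:
  assumes "a + b = z 3 + z m" "3 \<le> m"
  shows "expo b 0 = 0" "expo b (Suc 0) = 0" "expo b 2 = 0"
proof -
  have "expo b j \<le> expo (z 3 + z m) j" for j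
  proof -
    have "expo (a + b) j = expo (z 3 + z m) j" using assms(1) by simp
    then show ?thesis by (simp only: expo_add)
  qed
  from this[of 0] this[of "Suc 0"] this[of 2] assms(2)
  show "expo b 0 = 0" "expo b (Suc 0) = 0" "expo b 2 = 0" by auto
qed

text \<open>For isobaric Q0, every multiple P*B has zero coefficient at y'' y^(m-1): a monomial
of Q0 dividing it would have weight m+1 but the cofactor would have weight 2.\<close>

lemma coeff_ode_poly_mult_z3_zm:
  fixes Q0 :: "'a::field ser"
  assumes m3: "3 \<le> m" and E: "isobaric m Q0"
  shows "ser_mult (ode_poly m Q0) B (z 3 + z m) = 0"
proof -
  let ?mon = "z 3 + z m"
  have "ser_mult Q0 B ?mon = 0"
    unfolding ser_mult_def
  proof (rule sum.neutral, rule ballI)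
    fix p assume p: "p \<in> {p. fst p + snd p = ?mon}"
    show "Q0 (fst p) * B (snd p) = 0"
    proof (rule ccontr)
      assume "Q0 (fst p) * B (snd p) \<noteq> 0"
      then have q: "Q0 (fst p) \<noteq> 0" by auto
      have ps: "fst p + snd p = ?mon" "snd p + fst p = ?mon" using p by (auto simp: add.commute)
      have "expo (fst p) 0 + Suc m = weight m (fst p)" using E q by (simp add: isobaric_def)
      moreover have "expo (fst p) 0 = 0" using splitting_z3_zm(1)[OF ps(2) m3] .
      moreover have "weight m (fst p) + weight m (snd p) = 3 + m"
      proof -
        have "weight m ?mon = 3 + m" using m3 by (simp add: weight_add weight_z)
        then show ?thesis using ps(1) by (metis weight_add)
      qed
      ultimately have "weight m (snd p) = 2" by simp
      then show False using weight_gap[OF splitting_z3_zm(2,3)[OF ps(1) m3], of m] by simp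
    qed
  qed
  moreover have "ser_mult (ser_var (Suc m)) B ?mon = 0" using m3 by (simp add: coeff_var_mult)
  ultimately show ?thesis by (simp add: coeff_sub_mult)
qed

text \<open>In yp(P) at y'' y^(m-1), the terms phi_yp k * dP/dy^(k) with k < m vanish, again by
isobaricity and since phi_yp k avoids y^(m-1) for k < m - 1.\<close>

lemma coeff_phi_yp_pd_z3_zm:
  fixes Q0 :: "'a::field ser"
  assumes m3: "3 \<le> m" and E: "isobaric m Q0" and k: "k < m"
  shows "ser_mult (phi_yp k) (ser_pd (Suc k) (ode_poly m Q0)) (z 3 + z m) = 0"
  unfolding ser_mult_def
proof (rule sum.neutral, rule ballI)
  let ?mon = "z 3 + z m"
  fix p assume p: "p \<in> {p. fst p + snd p = ?mon}"
  show "(phi_yp k (fst p) :: 'a) * ser_pd (Suc k) (ode_poly m Q0) (snd p) = 0"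
  proof (rule ccontr)
    assume "(phi_yp k (fst p) :: 'a) * ser_pd (Suc k) (ode_poly m Q0) (snd p) \<noteq> 0"
    then have phi: "(phi_yp k (fst p) :: 'a) \<noteq> 0"
      and pd: "ser_pd (Suc k) (ode_poly m Q0) (snd p) \<noteq> 0" by auto
    have ps: "fst p + snd p = ?mon" using p by simp
    have "ser_pd (Suc k) Q0 (snd p) \<noteq> 0"
      using pd pd_ode_poly_below[OF k, where ?Q0.0 = Q0 and mon = "snd p"] by simp
    then have "Q0 (snd p + z (Suc k)) \<noteq> 0" by (simp add: coeff_pd)
    then have "expo (snd p + z (Suc k)) 0 + Suc m = weight m (snd p + z (Suc k))"
      using E unfolding isobaric_def by blast
    moreover have "weight m (snd p + z (Suc k)) = weight m (snd p) + Suc k"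
      using k by (simp add: weight_add weight_z)
    ultimately have w: "weight m (snd p) + Suc k = Suc m"
      using splitting_z3_zm(1)[OF ps m3] by simp
    have k0: "k \<noteq> 0" using phi by (intro notI) (simp add: ser_zero_def)
    show False
    proof (cases "Suc k < m")
      case True
      have "expo (fst p) m = 0"
        using phi_yp_avoids_coeff[of m k "fst p"] phi True by auto
      moreover have "expo (fst p) m + expo (snd p) m = expo ?mon m" using ps by (metis expo_add)
      ultimately have "1 \<le> expo (snd p) m" by simp
      moreover have "m * expo (snd p) m \<le> weight m (snd p)" by (rule weight_ge) (use m3 in auto)
      ultimately have "m \<le> weight m (snd p)"
        by (metis le_trans mult.right_neutral mult_le_mono2)
      then show False using w k0 by simp
    next
      case False
      then have "weight m (snd p) = 1" using w k by simp
      then show False using weight_gap[OF splitting_z3_zm(2,3)[OF ps m3], of m] by simp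
    qed
  qed
qed

lemma coeff_prol_yp_z3_zm:
  fixes Q0 :: "'a::field ser"
  assumes Q: "lower_order m Q0" and m3: "3 \<le> m" and E: "isobaric m Q0"
  shows "prol (ser_var (Suc 0)) ser_zero (ode_poly m Q0) (z 3 + z m) = phi_yp m (z 3 + z m)"
proof -
  let ?mon = "z 3 + z m" and ?P = "ode_poly m Q0"
  have "prol (ser_var (Suc 0)) ser_zero ?P ?mon =
    ser_mult (ser_var (Suc 0)) (ser_pd 0 ?P) ?mon + (\<Sum>k<Suc m. ser_mult (phi_yp k) (ser_pd (Suc k) ?P) ?mon)"
    by (simp only: prol_ode_poly[OF Q] lessThan_Suc_atMost)
  also have "(\<Sum>k<Suc m. ser_mult (phi_yp k) (ser_pd (Suc k) ?P) ?mon) =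
       (\<Sum>k<m. ser_mult (phi_yp k) (ser_pd (Suc k) ?P) ?mon) + ser_mult (phi_yp m) (ser_pd (Suc m) ?P) ?mon"
    by (rule sum.lessThan_Suc)
  also have "ser_mult (ser_var (Suc 0)) (ser_pd 0 ?P) ?mon = (0::'a)" using m3 by (simp add: coeff_var_mult)
  also have "(\<Sum>k<m. ser_mult (phi_yp k) (ser_pd (Suc k) ?P) ?mon) = (0::'a)"
    by (rule sum.neutral) (use coeff_phi_yp_pd_z3_zm[OF m3 E] in auto)
  also have "ser_mult (phi_yp m) (ser_pd (Suc m) ?P) ?mon = (phi_yp m ?mon :: 'a)"
    by (simp only: pd_ode_poly_top[OF Q] coeff_mult_const mult_1)
  finally show ?thesis by simp
qed

lemma yp_not_symmetry:
  fixes Q0 :: "'a::field_char_0 ser"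
  assumes Q: "lower_order m Q0" and m3: "3 \<le> m" and E: "isobaric m Q0"
  shows "(ser_var (Suc 0), ser_zero) \<notin> Lsym (ode_poly m Q0)"
proof
  assume "(ser_var (Suc 0), ser_zero) \<in> Lsym (ode_poly m Q0)"
  then obtain B where "prol (ser_var (Suc 0)) ser_zero (ode_poly m Q0) = ser_mult (ode_poly m Q0) B"
    using Lsym_D by blast
  then have "(phi_yp m (z 3 + z m) :: 'a) = 0"
    using coeff_prol_yp_z3_zm[OF Q m3 E] coeff_ode_poly_mult_z3_zm[OF m3 E, of B] by simp
  moreover obtain n where "n > 0" "(phi_yp m (z 3 + z m) :: 'a) = - of_nat n"
    using phi_yp_z3[OF m3] by blast
  ultimately show False by simp
qed


subsection \<open>Order 2: P = y'' and xp is a symmetry\<close>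

text \<open>For m = 2 the translations p and q show that Q0 involves neither x nor y; an
isobaric monomial in y' alone would need 3 = 2 deg_y'.\<close>

lemma order2_Q0_zero:
  fixes Q0 :: "'a::field_char_0 ser"
  assumes Q: "lower_order 2 Q0" and E: "isobaric 2 Q0"
    and Lp: "(ser_const 1, ser_zero) \<in> Lsym (ode_poly 2 Q0)"
    and Lq: "(ser_zero, ser_const 1) \<in> Lsym (ode_poly 2 Q0)"
  shows "Q0 c = 0"
proof (rule ccontr)
  let ?P = "ode_poly 2 Q0"
  assume c: "Q0 c \<noteq> 0"
  obtain B1 where B1: "in_A B1" "prol (ser_const 1) ser_zero ?P = ser_mult ?P B1"
    using Lsym_D[OF Lp] by blast
  obtain B2 where B2: "in_A B2" "prol ser_zero (ser_const 1) ?P = ser_mult ?P B2"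
    using Lsym_D[OF Lq] by blast
  have "prol (ser_const 1) ser_zero ?P = ser_pd 0 ?P"
    by (rule ext, subst prol_ode_poly[OF Q]) (simp add: prolPhi_p coeff_const_mult coeff_ser_zero_mult)
  then have x_free: "expo c 0 = 0"
    using translation_invariance[OF Q _ _ B1(1) _ c] B1(2) by simp
  have "prol ser_zero (ser_const 1) ?P = ser_pd (Suc 0) ?P"
  proof (rule ext)
    fix mon
    have "prol ser_zero (ser_const 1) ?P mon =
        (\<Sum>k\<le>2. ser_mult (prolPhi ser_zero (ser_const 1) k) (ser_pd (Suc k) ?P) mon)"
      by (subst prol_ode_poly[OF Q]) (simp add: coeff_ser_zero_mult)
    also have "\<dots> = (\<Sum>k\<le>(2::nat). if k = 0 then ser_pd (Suc 0) ?P mon else 0)"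
      by (rule sum.cong) (auto simp: prolPhi_q coeff_const_mult coeff_ser_zero_mult)
    also have "\<dots> = ser_pd (Suc 0) ?P mon" by (subst sum.delta) auto
    finally show "prol ser_zero (ser_const 1) ?P mon = ser_pd (Suc 0) ?P mon" .
  qed
  then have y_free: "expo c (Suc 0) = 0"
    using translation_invariance[OF Q _ _ B2(1) _ c] B2(2) by simp
  have "expo c 3 = 0" using Q c unfolding lower_order_def by (auto simp: numeral_eq_Suc)
  moreover have "weight 2 c = expo c 1 + 2 * expo c 2 + 3 * expo c 3"
    by (simp add: weight_def numeral_eq_Suc atMost_Suc)
  moreover have "expo c 0 + 3 = weight 2 c" using E c unfolding isobaric_def by simp
  ultimately have "3 = 2 * expo c 2" using x_free y_free by simp
  then show False by presburger
qed

text \<open>xp multiplies y'' by -2, so it is a symmetry of y''.\<close>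

lemma order2_xp_symmetry:
  fixes Q0 :: "'a::field_char_0 ser"
  assumes Q0: "\<And>c. Q0 c = 0"
  shows "(ser_var 0, ser_zero) \<in> Lsym (ode_poly 2 Q0)"
proof -
  let ?P = "ode_poly 2 Q0"
  have Q: "lower_order 2 Q0" using Q0 by (simp add: lower_order_def)
  have "prol (ser_var 0) ser_zero ?P mon = ser_mult ?P (ser_const (-2)) mon" for mon
  proof -
    have "prol (ser_var 0) ser_zero ?P mon = of_nat (expo mon 0) * ?P mon +
        (\<Sum>k\<le>2. (- of_nat k) * (of_nat (expo mon (Suc k)) * ?P mon))"
      by (subst prol_ode_poly[OF Q]) (simp add: prolPhi_xp coeff_smult_mult coeff_var_mult_pd)
    also have "\<dots> = -2 * ?P mon"
    proof (cases "mon = z 3")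
      case True then show ?thesis by (simp add: numeral_eq_Suc atMost_Suc coeff_ode_poly)
    next
      case False then have "?P mon = 0" by (simp add: coeff_ode_poly Q0 numeral_eq_Suc)
      then show ?thesis by simp
    qed
    finally show ?thesis by (simp add: coeff_mult_const)
  qed
  then have "prol (ser_var 0) ser_zero ?P = ser_mult ?P (ser_const (-2))" by (rule ext)
  moreover have "in_Kxy (ser_var 0 :: 'a ser)" "in_Kxy (ser_zero :: 'a ser)"
    by (auto simp: in_Kxy_def coeff_var ser_zero_def)
  ultimately show ?thesis unfolding Lsym_def using in_A_const by blast
qed


lemma span5_memberI:
  assumes "f = ser_add (ser_add (ser_const a) (ser_smult d (ser_var 0))) (ser_smult e (ser_var 1))"
    and "g = ser_sub (ser_add (ser_const b) (ser_smult c (ser_var 0))) (ser_smult d (ser_var 1))"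
  shows "(f, g) \<in> span5"
  unfolding span5_def using assms by blast

lemma span5_generators:
  "(ser_const 1, ser_zero) \<in> (span5 :: ('a::field ser \<times> 'a ser) set)"
  "(ser_zero, ser_const 1) \<in> (span5 :: ('a::field ser \<times> 'a ser) set)"
  "(ser_var 0, ser_smult (-1) (ser_var (Suc 0))) \<in> (span5 :: ('a::field ser \<times> 'a ser) set)"
  "(ser_var (Suc 0), ser_zero) \<in> (span5 :: ('a::field ser \<times> 'a ser) set)"
proof -
  note defs = ser_add_def ser_sub_def ser_smult_def ser_const_def ser_zero_def coeff_var
  show "(ser_const 1, ser_zero) \<in> (span5 :: ('a ser \<times> 'a ser) set)"
    by (rule span5_memberI[where a = 1 and b = 0 and c = 0 and d = 0 and e = 0]; rule ext; simp add: defs)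
  show "(ser_zero, ser_const 1) \<in> (span5 :: ('a ser \<times> 'a ser) set)"
    by (rule span5_memberI[where a = 0 and b = 1 and c = 0 and d = 0 and e = 0]; rule ext; simp add: defs)
  show "(ser_var 0, ser_smult (-1) (ser_var (Suc 0))) \<in> (span5 :: ('a ser \<times> 'a ser) set)"
    by (rule span5_memberI[where a = 0 and b = 0 and c = 0 and d = 1 and e = 0]; rule ext; simp add: defs)
  show "(ser_var (Suc 0), ser_zero) \<in> (span5 :: ('a ser \<times> 'a ser) set)"
    by (rule span5_memberI[where a = 0 and b = 0 and c = 0 and d = 0 and e = 1]; rule ext; simp add: defs)
qed

text \<open>xp is not in the span: its q-component forces the coefficient of xp - yq to
vanish, its p-component forces it to be 1.\<close>

lemma xp_notin_span5: "(ser_var 0, ser_zero) \<notin> (span5 :: ('a::field ser \<times> 'a ser) set)"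
proof
  assume "(ser_var 0, ser_zero) \<in> (span5 :: ('a ser \<times> 'a ser) set)"
  then obtain a b c d e :: 'a where
    f: "ser_var 0 = ser_add (ser_add (ser_const a) (ser_smult d (ser_var 0))) (ser_smult e (ser_var 1))" and
    g: "ser_zero = ser_sub (ser_add (ser_const b) (ser_smult c (ser_var 0))) (ser_smult d (ser_var 1))"
    unfolding span5_def by blast
  have n0: "z 0 \<noteq> 0" "z 0 \<noteq> z 1" "z 1 \<noteq> 0" by (auto simp: monomial_eq_iff)
  have "d = 1" using fun_cong[OF f, of "z 0"] n0
    by (simp add: ser_add_def ser_smult_def ser_const_def coeff_var)
  moreover have "d = 0" using fun_cong[OF g, of "z 1"] n0
    by (simp add: ser_add_def ser_sub_def ser_zero_def ser_smult_def ser_const_def coeff_var)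
  ultimately show False by simp
qed


theorem mainTheorem10:
  shows "\<not> (\<exists>(m::nat) (Q0 :: 'a::field_char_0 ser).
            2 \<le> m \<and> in_A Q0 \<and>
            (\<forall>mon. Q0 mon \<noteq> 0 \<longrightarrow> (\<forall>i\<ge>m. Poly_Mapping.lookup mon (Suc i) = 0)) \<and>
            Lsym (ser_sub (ser_var (Suc m)) Q0) = span5)"
proof
  assume "\<exists>(m::nat) (Q0 :: 'a::field_char_0 ser).
            2 \<le> m \<and> in_A Q0 \<and>
            (\<forall>mon. Q0 mon \<noteq> 0 \<longrightarrow> (\<forall>i\<ge>m. Poly_Mapping.lookup mon (Suc i) = 0)) \<and>
            Lsym (ser_sub (ser_var (Suc m)) Q0) = span5"
  then obtain m and Q0 :: "'a ser" where m2: "2 \<le> m" and Q: "lower_order m Q0"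
    and L: "Lsym (ode_poly m Q0) = span5"
    unfolding lower_order_def by blast
  have E: "isobaric m Q0"
    using isobaric_from_scaling[OF Q] m2 L span5_generators(3)[where 'a='a] by simp
  show False
  proof (cases "3 \<le> m")
    case True
    then show False using yp_not_symmetry[OF Q True E] L span5_generators(4)[where 'a='a] by simp
  next
    case False
    with m2 have m: "m = 2" by simp
    then have "Q0 c = 0" for c
      using order2_Q0_zero[of Q0] Q E L span5_generators(1,2)[where 'a='a] by simp
    then have "(ser_var 0, ser_zero) \<in> Lsym (ode_poly m Q0)" unfolding m by (rule order2_xp_symmetry)
    then show False using L xp_notin_span5[where 'a='a] by simp
  qed
qed

end
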